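(* Let $s\in\mathbb{N}$, let $M$ be a quadratic form on $\mathbb{F}_{p}^{d}$, and let $x_{1},x_{2}\in\Gamma^{s}(M)$ and $y\in\Gamma^{s}_{1}(M)$. If $x_{1}\sim y$ and $x_{2}\sim y$, then $x_{1}\sim x_{2}$. In particular, $\sim$ is an equivalence relation on $\Gamma^{s}_{1}(M)$.
   Context: $\mathrm{HP}_{d}(s)$: homogeneous degree-$s$ polynomials in $\mathbb{F}_{p}[x_{1},\dots,x_{d}]$ plus $0$. $M(n)=(nA)\cdot n+n\cdot u+v$ with $A$ symmetric. For a subspace $V$, $J^{M}_{V}$ is the ideal of $\mathbb{F}_{p}[x_{1},\dots,x_{d}]$ generated by $n\mapsto(nA)\cdot n$ and $n\mapsto(hA)\cdot n$, $h\in V$. $\Gamma^{s}(M)$ is the set of pairs $(h,J^{M}_{V}+f)$ with $V$ a subspace of $\mathbb{F}_{p}^{d}$, $h\in V$, $f\in\mathrm{HP}_{d}(s)$; $\Gamma^{s}_{1}(M)$ is the subset of elements of the form $(h,J^{M}_{\mathrm{span}\{h\}}+f)$. $(h,I+f)\sim(h',I'+f')$ iff $h=h'$ and $f-f'\in I+I'$. *)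

theory Defs
  imports "HOL-Analysis.Analysis" "HOL-Library.Poly_Mapping"
begin

text \<open>Polynomials in the variables x_i (i :: 'n) over the field 'a, as finitely
supported maps from monomials (exponent vectors) to coefficients.\<close>
type_synonym ('a, 'n) mpoly = "('n \<Rightarrow>\<^sub>0 nat) \<Rightarrow>\<^sub>0 'a"

definition Var :: "'n \<Rightarrow> ('a::comm_ring_1, 'n) mpoly" where
  "Var i = Poly_Mapping.single (Poly_Mapping.single i 1) 1"

definition Const :: "'a::comm_ring_1 \<Rightarrow> ('a, 'n) mpoly" where
  "Const c = Poly_Mapping.single 0 c"

definition mon_deg :: "('n \<Rightarrow>\<^sub>0 nat) \<Rightarrow> nat" where
  "mon_deg m = sum (Poly_Mapping.lookup m) (Poly_Mapping.keys m)"

definition HP :: "nat \<Rightarrow> ('a::comm_ring_1, 'n) mpoly set" where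
  "HP s = {f. \<forall>m \<in> Poly_Mapping.keys f. mon_deg m = s}"

definition ideal_gen :: "('a::comm_ring_1, 'n) mpoly set \<Rightarrow> ('a, 'n) mpoly set" where
  "ideal_gen G = {(\<Sum>g\<in>F. c g * g) | F c. finite F \<and> F \<subseteq> G}"

text \<open>A quadratic form M(n) = (nA).n + n.u + v is given by the triple (A, u, v).\<close>
type_synonym ('a, 'n) qform = "('a^'n^'n) \<times> ('a^'n) \<times> 'a"

definition quad_form :: "('a::field, 'n::finite) qform \<Rightarrow> bool" where
  "quad_form M = (transpose (fst M) = fst M)"

definition qmat :: "('a, 'n) qform \<Rightarrow> 'a^'n^'n" where
  "qmat M = fst M"

definition quad_poly :: "'a::field^'n^'n \<Rightarrow> ('a, 'n::finite) mpoly" where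
  "quad_poly A = (\<Sum>i\<in>UNIV. \<Sum>j\<in>UNIV. Const (A$i$j) * Var i * Var j)"

definition lin_poly :: "'a::field^'n^'n \<Rightarrow> 'a^'n \<Rightarrow> ('a, 'n::finite) mpoly" where
  "lin_poly A h = (\<Sum>j\<in>UNIV. Const ((h v* A)$j) * Var j)"

definition J :: "('a::field, 'n::finite) qform \<Rightarrow> ('a^'n) set \<Rightarrow> ('a, 'n) mpoly set" where
  "J M V = ideal_gen ({quad_poly (qmat M)} \<union> lin_poly (qmat M) ` V)"

text \<open>An element (h, J_V + f) of Gamma^s(M) is represented by the triple (h, V, f).\<close>
type_synonym ('a, 'n) gelem = "('a^'n) \<times> ('a^'n) set \<times> ('a, 'n) mpoly"

definition Gamma :: "nat \<Rightarrow> ('a::field, 'n::finite) qform \<Rightarrow> ('a, 'n) gelem set" where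
  "Gamma s M = {(h, V, f). vec.subspace V \<and> h \<in> V \<and> f \<in> HP s}"

definition Gamma1 :: "nat \<Rightarrow> ('a::field, 'n::finite) qform \<Rightarrow> ('a, 'n) gelem set" where
  "Gamma1 s M = {(h, V, f) \<in> Gamma s M. V = vec.span {h}}"

definition sim :: "('a::field, 'n::finite) qform \<Rightarrow> ('a, 'n) gelem \<Rightarrow> ('a, 'n) gelem \<Rightarrow> bool" where
  "sim M x y = (case x of (h, V, f) \<Rightarrow> case y of (h', V', f') \<Rightarrow>
      h = h' \<and> (\<exists>a\<in>J M V. \<exists>b\<in>J M V'. f - f' = a + b))"

end

theory Submission
  imports Defs
begin

text \<open>For h in V the generators of J_span{h} are among those of J_V, so J_span{h} is
  contained in J_V. If x1 ~ y and x2 ~ y with y = (h, J_span{h} + g), the parts of f1 - g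
  and f2 - g lying in J_span{h} can therefore be absorbed into J_V1 and J_V2, and then
  f1 - f2 = (f1 - g) - (f2 - g) lies in J_V1 + J_V2.\<close>

interpretation ideal: module "(*) :: 'a::comm_ring_1 \<Rightarrow> 'a \<Rightarrow> 'a"
  by unfold_locales (simp_all add: algebra_simps)

lemma ideal_gen_eq_span: "ideal_gen G = ideal.span G"
  unfolding ideal_gen_def ideal.span_explicit ..

lemma J_eq_span: "J M V = ideal.span ({quad_poly (qmat M)} \<union> lin_poly (qmat M) ` V)"
  unfolding J_def ideal_gen_eq_span ..

lemma J_zero: "0 \<in> J M V"
  unfolding J_eq_span by (rule ideal.span_zero)

lemma J_add: "a \<in> J M V \<Longrightarrow> b \<in> J M V \<Longrightarrow> a + b \<in> J M V"
  unfolding J_eq_span by (rule ideal.span_add)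

lemma J_neg: "a \<in> J M V \<Longrightarrow> - a \<in> J M V"
  unfolding J_eq_span by (rule ideal.span_neg)

lemma J_mono: "V \<subseteq> W \<Longrightarrow> J M V \<subseteq> J M W"
  unfolding J_eq_span by (intro ideal.span_mono) blast

lemma J_span_singleton_subset:
  assumes "vec.subspace V" and "h \<in> V"
  shows "J M (vec.span {h}) \<subseteq> J M V"
  using assms by (intro J_mono vec.span_minimal) simp_all

lemma sim_refl: "sim M x x"
  unfolding sim_def by (cases x) (auto intro!: bexI[OF _ J_zero])

lemma sim_sym:
  assumes "sim M x y"
  shows "sim M y x"
proof -
  obtain h V f h' V' f' where xy: "x = (h, V, f)" "y = (h', V', f')"
    by (cases x, cases y) auto
  with assms obtain a b where "h = h'" "a \<in> J M V" "b \<in> J M V'" "f - f' = a + b"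
    unfolding sim_def by auto
  moreover have "f' - f = - b + - a"
    using \<open>f - f' = a + b\<close> by (simp add: algebra_simps)
  ultimately show ?thesis
    unfolding xy sim_def by (blast intro: J_neg)
qed

lemma sim_trans_through:
  assumes "J M V \<subseteq> J M V1" and "J M V \<subseteq> J M V2"
    and "sim M (h1, V1, f1) (h, V, g)" and "sim M (h2, V2, f2) (h, V, g)"
  shows "sim M (h1, V1, f1) (h2, V2, f2)"
proof -
  from assms(3) obtain a1 b1 where 1: "h1 = h" "a1 \<in> J M V1" "b1 \<in> J M V" "f1 - g = a1 + b1"
    unfolding sim_def by auto
  from assms(4) obtain a2 b2 where 2: "h2 = h" "a2 \<in> J M V2" "b2 \<in> J M V" "f2 - g = a2 + b2"
    unfolding sim_def by auto
  have "a1 + b1 \<in> J M V1"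
    using 1 assms(1) by (blast intro: J_add)
  moreover have "- (a2 + b2) \<in> J M V2"
    using 2 assms(2) by (blast intro: J_add J_neg)
  moreover have "f1 - f2 = (a1 + b1) + - (a2 + b2)"
    using 1(4) 2(4) by (simp add: algebra_simps)
  ultimately show ?thesis
    using 1(1) 2(1) unfolding sim_def by auto
qed

lemma sim_trans_through_Gamma1:
  assumes "x1 \<in> Gamma s M" and "x2 \<in> Gamma s M" and "y \<in> Gamma1 s M"
    and "sim M x1 y" and "sim M x2 y"
  shows "sim M x1 x2"
proof -
  obtain h1 V1 f1 h2 V2 f2 h V g where xy: "x1 = (h1, V1, f1)" "x2 = (h2, V2, f2)" "y = (h, V, g)"
    by (cases x1, cases x2, cases y) auto
  with assms have "h1 = h" "h2 = h" "V = vec.span {h}"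
    and "vec.subspace V1" "h1 \<in> V1" "vec.subspace V2" "h2 \<in> V2"
    unfolding sim_def Gamma1_def Gamma_def by auto
  then have "J M V \<subseteq> J M V1" and "J M V \<subseteq> J M V2"
    by (simp_all add: J_span_singleton_subset)
  then show ?thesis
    using assms(4,5) unfolding xy by (rule sim_trans_through)
qed

theorem lemma2p5:
  fixes M :: "('a::{field,finite}, 'n::finite) qform" and s :: nat
  assumes "prime CARD('a)"
    and "quad_form M"
  shows "(\<forall>x1 x2 y. x1 \<in> Gamma s M \<and> x2 \<in> Gamma s M \<and> y \<in> Gamma1 s M \<and>
            sim M x1 y \<and> sim M x2 y \<longrightarrow> sim M x1 x2)
         \<and> equiv (Gamma1 s M) {(x, y). x \<in> Gamma1 s M \<and> y \<in> Gamma1 s M \<and> sim M x y}"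
proof (intro conjI allI impI equivI)
  show "sim M x1 x2"
    if "x1 \<in> Gamma s M \<and> x2 \<in> Gamma s M \<and> y \<in> Gamma1 s M \<and> sim M x1 y \<and> sim M x2 y"
    for x1 x2 y
    using that sim_trans_through_Gamma1 by blast
  have "Gamma1 s M \<subseteq> Gamma s M"
    unfolding Gamma1_def by auto
  then show "trans {(x, y). x \<in> Gamma1 s M \<and> y \<in> Gamma1 s M \<and> sim M x y}"
    by (auto simp: trans_def intro: sim_trans_through_Gamma1 sim_sym)
qed (auto simp: refl_on_def sym_def sim_refl intro: sim_sym)

end
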